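(* Let $\mathcal{M}=\langle S,\iota,\mathsf{Act},P,\mathsf{Z},\mathsf{obs}\rangle$ be an MDP. For every trace $\tau\in\mathsf{Z}^+$ and every state-risk function $r\colon S\to\mathbb{R}_{\ge0}$: $R_r(\tau)=\max_{\mathsf{bel}\in V(\mathsf{est}_{\mathsf{MDP}}(\tau))}\sum_{s\in S}\mathsf{bel}(s)\cdot r(s)$.
   Context: An MDP is a tuple $\langle S,\iota,\mathsf{Act},P,\mathsf{Z},\mathsf{obs}\rangle$: finite state set $S$, initial distribution $\iota\in\mathsf{Distr}(S)$, finite action set $\mathsf{Act}$, partial transition function $P\colon S\times\mathsf{Act}\rightharpoonup\mathsf{Distr}(S)$ (write $P(s,\alpha,s')=P(s,\alpha)(s')$), finite observation set $\mathsf{Z}$, observation function $\mathsf{obs}\colon S\to\mathsf{Distr}(\mathsf{Z})$; $\mathsf{AvAct}(s)=\{\alpha\mid P(s,\alpha)\text{ defined}\}\neq\emptyset$. A finite path is $\pi=s_0a_0\dots a_{n-1}s_n$ with $\iota(s_0)>0$, $P(s_i,a_i)(s_{i+1})>0$; $\mathrm{last}(\pi)=s_n$. A scheduler $\sigma$ maps each finite path $\pi$ to a distribution on $\mathsf{AvAct}(\mathrm{last}(\pi))$; $\Sigma$ is the set of schedulers; $\Pr^\sigma(\pi)=\iota(s_0)\prod_{i<n}\sigma(s_0a_0\dots s_i)(a_i)P(s_i,a_i)(s_{i+1})$. For a trace $\tau=z_0\dots z_n$ and path $\pi=s_0\dots s_m$, $\Pr(\tau\mid\pi)=\prod_{i=0}^n\mathsf{obs}(s_i)(z_i)$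 if $m=n$, else $0$; $\mathrm{Paths}(\tau)$ are the paths with as many states as $\tau$ has observations; $\Pr^\sigma(\tau)=\sum_\pi\Pr^\sigma(\pi)\Pr(\tau\mid\pi)$; $\Pr^\sigma(\pi\mid\tau)=\Pr(\tau\mid\pi)\Pr^\sigma(\pi)/\Pr^\sigma(\tau)$ with $0/0=0$. $R_r(\tau)=\sup_{\sigma\in\Sigma}\sum_{\pi\in\mathrm{Paths}(\tau)}\Pr^\sigma(\pi\mid\tau)r(\mathrm{last}(\pi))$. Beliefs: $\mathsf{Bel}=\mathsf{Distr}(S)\cup\{\mathbf{0}\}$, viewed as vectors in $\mathbb{R}^S$. $\mathsf{est}_{\mathsf{MDP}}(z)=\{b_z\}$ with $b_z(s)=\iota(s)\mathsf{obs}(s)(z)/\sum_{\hat s}\iota(\hat s)\mathsf{obs}(\hat s)(z)$ (or $\mathbf{0}$ if the denominator vanishes), and $\mathsf{est}_{\mathsf{MDP}}(\tau\cdot z)=\bigcup_{\mathsf{bel}\in\mathsf{est}_{\mathsf{MDP}}(\tau)}\mathsf{est}^{\mathsf{up}}(\mathsf{bel},z)$, where $\mathsf{bel}'\in\mathsf{est}^{\mathsf{up}}(\mathsf{bel},z)$ iff there is $\varsigma\colon S\to\mathsf{Distr}(\mathsf{Act})$ with $\varsigma(s)$ supported in $\mathsf{AvAct}(s)$ and $\mathsf{bel}'(s')=\dfrac{\sum_s\mathsf{bel}(s)\sum_\alpha\varsigma(s)(\alpha)P(s,\alpha,s')\mathsf{obs}(s')(z)}{\sum_s\mathsf{bel}(s)\sum_\alpha\varsigma(s)(\alpha)\sum_{\hat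 s}P(s,\alpha,\hat s)\mathsf{obs}(\hat s)(z)}$ for all $s'$ ($0/0=0$). For $B\subseteq\mathsf{Bel}$, a belief in $B$ is interior if it is a convex combination of beliefs in $B\setminus\{\mathsf{bel}\}$; $V(B)\subseteq B$ is the set of non-interior elements (vertices of the convex hull of $B$). *)

theory Defs
  imports Complex_Main
begin

definition is_distr :: "('x::finite \<Rightarrow> real) \<Rightarrow> bool" where
  "is_distr d \<longleftrightarrow> (\<forall>x. 0 \<le> d x) \<and> (\<Sum>x\<in>UNIV. d x) = 1"

definition AvAct :: "('s \<Rightarrow> 'a \<Rightarrow> ('s \<Rightarrow> real) option) \<Rightarrow> 's \<Rightarrow> 'a set" where
  "AvAct P s = {\<alpha>. P s \<alpha> \<noteq> None}"

definition is_mdp ::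
  "('s::finite \<Rightarrow> real) \<Rightarrow> ('s \<Rightarrow> 'a::finite \<Rightarrow> ('s \<Rightarrow> real) option) \<Rightarrow> ('s \<Rightarrow> 'z::finite \<Rightarrow> real) \<Rightarrow> bool" where
  "is_mdp iota P obs \<longleftrightarrow> is_distr iota \<and> (\<forall>s. is_distr (obs s)) \<and>
     (\<forall>s. AvAct P s \<noteq> {}) \<and> (\<forall>s \<alpha> d. P s \<alpha> = Some d \<longrightarrow> is_distr d)"

text \<open>P(s,alpha,s'), meaningful when P(s,alpha) is defined.\<close>
definition Ptr :: "('s \<Rightarrow> 'a \<Rightarrow> ('s \<Rightarrow> real) option) \<Rightarrow> 's \<Rightarrow> 'a \<Rightarrow> 's \<Rightarrow> real" where
  "Ptr P s \<alpha> s' = (case P s \<alpha> of None \<Rightarrow> 0 | Some d \<Rightarrow> d s')"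

text \<open>A finite path s0 a0 s1 ... a(n-1) sn is represented as the pair ([s0,...,sn],[a0,...,a(n-1)]).\<close>
definition is_path ::
  "('s \<Rightarrow> real) \<Rightarrow> ('s \<Rightarrow> 'a \<Rightarrow> ('s \<Rightarrow> real) option) \<Rightarrow> 's list \<times> 'a list \<Rightarrow> bool" where
  "is_path iota P \<pi> \<longleftrightarrow> (let ss = fst \<pi>; as = snd \<pi> in
     length ss = length as + 1 \<and> iota (ss ! 0) > 0 \<and>
     (\<forall>i < length as. P (ss ! i) (as ! i) \<noteq> None \<and> Ptr P (ss ! i) (as ! i) (ss ! Suc i) > 0))"

definition is_scheduler ::
  "('s::finite \<Rightarrow> real) \<Rightarrow> ('s \<Rightarrow> 'a::finite \<Rightarrow> ('s \<Rightarrow> real) option)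
   \<Rightarrow> ('s list \<Rightarrow> 'a list \<Rightarrow> 'a \<Rightarrow> real) \<Rightarrow> bool" where
  "is_scheduler iota P \<sigma> \<longleftrightarrow> (\<forall>ss as. is_path iota P (ss, as) \<longrightarrow>
     is_distr (\<sigma> ss as) \<and> (\<forall>\<alpha>. \<sigma> ss as \<alpha> > 0 \<longrightarrow> \<alpha> \<in> AvAct P (last ss)))"

definition Pr_path ::
  "('s \<Rightarrow> real) \<Rightarrow> ('s \<Rightarrow> 'a \<Rightarrow> ('s \<Rightarrow> real) option)
   \<Rightarrow> ('s list \<Rightarrow> 'a list \<Rightarrow> 'a \<Rightarrow> real) \<Rightarrow> 's list \<times> 'a list \<Rightarrow> real" where
  "Pr_path iota P \<sigma> \<pi> = (let ss = fst \<pi>; as = snd \<pi> in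
     iota (ss ! 0) * (\<Prod>i < length as.
        \<sigma> (take (Suc i) ss) (take i as) (as ! i) * Ptr P (ss ! i) (as ! i) (ss ! Suc i)))"

definition Pr_obs :: "('s \<Rightarrow> 'z \<Rightarrow> real) \<Rightarrow> 'z list \<Rightarrow> 's list \<times> 'a list \<Rightarrow> real" where
  "Pr_obs obs \<tau> \<pi> = (if length (fst \<pi>) = length \<tau>
      then (\<Prod>i < length \<tau>. obs (fst \<pi> ! i) (\<tau> ! i)) else 0)"

definition Paths ::
  "('s \<Rightarrow> real) \<Rightarrow> ('s \<Rightarrow> 'a \<Rightarrow> ('s \<Rightarrow> real) option) \<Rightarrow> 'z list \<Rightarrow> ('s list \<times> 'a list) set" where
  "Paths iota P \<tau> = {\<pi>. is_path iota P \<pi> \<and> length (fst \<pi>) = length \<tau>}"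

definition Pr_trace ::
  "('s \<Rightarrow> real) \<Rightarrow> ('s \<Rightarrow> 'a \<Rightarrow> ('s \<Rightarrow> real) option) \<Rightarrow> ('s \<Rightarrow> 'z \<Rightarrow> real)
   \<Rightarrow> ('s list \<Rightarrow> 'a list \<Rightarrow> 'a \<Rightarrow> real) \<Rightarrow> 'z list \<Rightarrow> real" where
  "Pr_trace iota P obs \<sigma> \<tau> = (\<Sum>\<pi>\<in>Paths iota P \<tau>. Pr_path iota P \<sigma> \<pi> * Pr_obs obs \<tau> \<pi>)"

text \<open>Pr^sigma(pi | tau), with 0/0 = 0 (Isabelle's x / 0 = 0).\<close>
definition Pr_cond ::
  "('s \<Rightarrow> real) \<Rightarrow> ('s \<Rightarrow> 'a \<Rightarrow> ('s \<Rightarrow> real) option) \<Rightarrow> ('s \<Rightarrow> 'z \<Rightarrow> real)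
   \<Rightarrow> ('s list \<Rightarrow> 'a list \<Rightarrow> 'a \<Rightarrow> real) \<Rightarrow> 's list \<times> 'a list \<Rightarrow> 'z list \<Rightarrow> real" where
  "Pr_cond iota P obs \<sigma> \<pi> \<tau> =
     Pr_obs obs \<tau> \<pi> * Pr_path iota P \<sigma> \<pi> / Pr_trace iota P obs \<sigma> \<tau>"

definition Risk ::
  "('s::finite \<Rightarrow> real) \<Rightarrow> ('s \<Rightarrow> 'a::finite \<Rightarrow> ('s \<Rightarrow> real) option) \<Rightarrow> ('s \<Rightarrow> 'z \<Rightarrow> real)
   \<Rightarrow> ('s \<Rightarrow> real) \<Rightarrow> 'z list \<Rightarrow> real" where
  "Risk iota P obs r \<tau> = (SUP \<sigma> \<in> {\<sigma>. is_scheduler iota P \<sigma>}.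
     \<Sum>\<pi>\<in>Paths iota P \<tau>. Pr_cond iota P obs \<sigma> \<pi> \<tau> * r (last (fst \<pi>)))"

definition bel_init :: "('s::finite \<Rightarrow> real) \<Rightarrow> ('s \<Rightarrow> 'z \<Rightarrow> real) \<Rightarrow> 'z \<Rightarrow> 's \<Rightarrow> real" where
  "bel_init iota obs z = (\<lambda>s. iota s * obs s z / (\<Sum>t\<in>UNIV. iota t * obs t z))"

definition est_up ::
  "('s::finite \<Rightarrow> 'a::finite \<Rightarrow> ('s \<Rightarrow> real) option) \<Rightarrow> ('s \<Rightarrow> 'z \<Rightarrow> real)
   \<Rightarrow> ('s \<Rightarrow> real) \<Rightarrow> 'z \<Rightarrow> ('s \<Rightarrow> real) set" where
  "est_up P obs bel z = {bel'. \<exists>sch :: 's \<Rightarrow> 'a \<Rightarrow> real.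
      (\<forall>s. is_distr (sch s) \<and> (\<forall>\<alpha>. sch s \<alpha> > 0 \<longrightarrow> \<alpha> \<in> AvAct P s)) \<and>
      (\<forall>s'. bel' s' =
         (\<Sum>s\<in>UNIV. bel s * (\<Sum>\<alpha>\<in>UNIV. sch s \<alpha> * Ptr P s \<alpha> s' * obs s' z)) /
         (\<Sum>s\<in>UNIV. bel s * (\<Sum>\<alpha>\<in>UNIV. sch s \<alpha> * (\<Sum>t\<in>UNIV. Ptr P s \<alpha> t * obs t z))))}"

text \<open>est on the reversed trace: est_rev (rev tau).\<close>
fun est_rev ::
  "('s::finite \<Rightarrow> real) \<Rightarrow> ('s \<Rightarrow> 'a::finite \<Rightarrow> ('s \<Rightarrow> real) option) \<Rightarrow> ('s \<Rightarrow> 'z \<Rightarrow> real)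
   \<Rightarrow> 'z list \<Rightarrow> ('s \<Rightarrow> real) set" where
  "est_rev iota P obs [] = {}"
| "est_rev iota P obs [z] = {bel_init iota obs z}"
| "est_rev iota P obs (z # y # ys) = (\<Union>bel \<in> est_rev iota P obs (y # ys). est_up P obs bel z)"

definition est_MDP ::
  "('s::finite \<Rightarrow> real) \<Rightarrow> ('s \<Rightarrow> 'a::finite \<Rightarrow> ('s \<Rightarrow> real) option) \<Rightarrow> ('s \<Rightarrow> 'z \<Rightarrow> real)
   \<Rightarrow> 'z list \<Rightarrow> ('s \<Rightarrow> real) set" where
  "est_MDP iota P obs \<tau> = est_rev iota P obs (rev \<tau>)"

definition convex_comb_of :: "('s::finite \<Rightarrow> real) set \<Rightarrow> ('s \<Rightarrow> real) \<Rightarrow> bool" where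
  "convex_comb_of A b \<longleftrightarrow> (\<exists>F u. finite F \<and> F \<subseteq> A \<and> (\<forall>x\<in>F. 0 \<le> u x) \<and> (\<Sum>x\<in>F. u x) = 1
      \<and> b = (\<lambda>s. \<Sum>x\<in>F. u x * x s))"

definition Vert :: "('s::finite \<Rightarrow> real) set \<Rightarrow> ('s \<Rightarrow> real) set" where
  "Vert B = {b \<in> B. \<not> convex_comb_of (B - {b}) b}"

end

theory Submission
  imports Defs "HOL-Library.FuncSet" "HOL-Library.Product_Lexorder"
begin

text \<open>
  Without the normalizing denominators the belief update is linear.  The unnormalized beliefs
  reachable along \<open>\<tau>\<close> are exactly the vectors \<open>s \<mapsto> Pr\<^sup>\<sigma>(\<tau>, last = s)\<close> for schedulers \<open>\<sigma>\<close>, so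
  the risk of \<open>\<sigma>\<close> is the linear functional \<open>b \<mapsto> \<Sum>s. b s * r s\<close> evaluated at the corresponding
  belief, and \<open>R\<^sub>r(\<tau>)\<close> is its supremum over \<open>est\<^sub>M\<^sub>D\<^sub>P(\<tau>)\<close>.  Writing a randomized decision rule as
  a mixture of deterministic ones shows that every belief in \<open>est\<^sub>M\<^sub>D\<^sub>P(\<tau>)\<close> is \<open>\<zero>\<close> or a convex
  combination of the finitely many beliefs produced by deterministic choices.  Hence the
  supremum is a maximum, and a maximiser of largest Euclidean norm is a vertex.
\<close>

section \<open>Convex combinations and a vertex criterion\<close>

definition dot :: "('s::finite \<Rightarrow> real) \<Rightarrow> ('s \<Rightarrow> real) \<Rightarrow> real" where
  "dot x y = (\<Sum>s\<in>UNIV. x s * y s)"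

lemma dot_self_nonneg: "0 \<le> dot x x"
  unfolding dot_def by (simp add: sum_nonneg)

lemma dot_self_eq_0_iff: "dot x x = 0 \<longleftrightarrow> x = (\<lambda>_. 0)"
  unfolding dot_def by (simp add: sum_nonneg_eq_0_iff fun_eq_iff)

lemma dot_zero_left [simp]: "dot (\<lambda>_. 0) y = 0"
  unfolding dot_def by simp

lemma dot_comb_left:
  "dot (\<lambda>s. \<Sum>i\<in>F. c i * y i s) r = (\<Sum>i\<in>F. c i * dot (y i) r)"
proof -
  have "dot (\<lambda>s. \<Sum>i\<in>F. c i * y i s) r = (\<Sum>s\<in>UNIV. \<Sum>i\<in>F. c i * (y i s * r s))"
    unfolding dot_def by (simp add: sum_distrib_right mult.assoc)
  also have "\<dots> = (\<Sum>i\<in>F. c i * dot (y i) r)"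
    unfolding dot_def by (subst sum.swap) (simp add: sum_distrib_left)
  finally show ?thesis .
qed

lemma dot_diff_self:
  "dot (\<lambda>s. y s - x s) (\<lambda>s. y s - x s) = dot y y - 2 * dot y x + dot x x"
  unfolding dot_def by (simp add: algebra_simps sum.distrib sum_subtractf sum_distrib_left)

lemma convex_comb_spread:
  assumes "(\<Sum>i\<in>F. c i) = 1" and x: "x = (\<lambda>s. \<Sum>i\<in>F. c i * y i s)"
  shows "(\<Sum>i\<in>F. c i * dot (\<lambda>s. y i s - x s) (\<lambda>s. y i s - x s))
           = (\<Sum>i\<in>F. c i * dot (y i) (y i)) - dot x x"
proof -
  have cross: "(\<Sum>i\<in>F. c i * dot (y i) x) = dot x x"
    using dot_comb_left[of c y F x] x by simp
  have "(\<Sum>i\<in>F. c i * dot (\<lambda>s. y i s - x s) (\<lambda>s. y i s - x s))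
      = (\<Sum>i\<in>F. c i * dot (y i) (y i)) - 2 * (\<Sum>i\<in>F. c i * dot (y i) x) + (\<Sum>i\<in>F. c i) * dot x x"
    unfolding dot_diff_self
    by (simp add: algebra_simps sum.distrib sum_subtractf sum_distrib_left sum_distrib_right)
  then show ?thesis using cross assms(1) by simp
qed

lemma convex_comb_lex_le:
  fixes y :: "'i \<Rightarrow> 's::finite \<Rightarrow> real"
  assumes fin: "finite F" and c: "\<forall>i\<in>F. 0 \<le> c i" "(\<Sum>i\<in>F. c i) = 1"
    and x: "x = (\<lambda>s. \<Sum>i\<in>F. c i * y i s)"
    and le: "\<forall>i\<in>F. dot (y i) r \<le> M"
    and tie: "\<forall>i\<in>F. dot (y i) r = M \<longrightarrow> dot (y i) (y i) \<le> B"
  shows "dot x r \<le> M"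
    and "dot x r = M \<Longrightarrow>
           (\<Sum>i\<in>F. c i * dot (\<lambda>s. y i s - x s) (\<lambda>s. y i s - x s)) + dot x x \<le> B"
proof -
  have dx: "dot x r = (\<Sum>i\<in>F. c i * dot (y i) r)"
    unfolding x by (rule dot_comb_left)
  have gap: "(\<Sum>i\<in>F. c i * (M - dot (y i) r)) = M - dot x r"
    unfolding dx using c(2) by (simp add: right_diff_distrib sum_subtractf flip: sum_distrib_right)
  have gap_nonneg: "\<forall>i\<in>F. 0 \<le> c i * (M - dot (y i) r)"
    using c(1) le by simp
  then show "dot x r \<le> M"
    using gap sum_nonneg[of F "\<lambda>i. c i * (M - dot (y i) r)"] by simp
  assume eq: "dot x r = M"
  have "(\<Sum>i\<in>F. c i * (M - dot (y i) r)) = 0"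
    using gap eq by simp
  then have zero: "\<forall>i\<in>F. c i * (M - dot (y i) r) = 0"
    using sum_nonneg_eq_0_iff[OF fin, of "\<lambda>i. c i * (M - dot (y i) r)"] gap_nonneg by blast
  have "c i * dot (y i) (y i) \<le> c i * B" if i: "i \<in> F" for i
  proof (cases "c i = 0")
    case False
    then have "dot (y i) r = M" using zero i by force
    then show ?thesis using tie c(1) i by (simp add: mult_left_mono)
  qed simp
  then have "(\<Sum>i\<in>F. c i * dot (y i) (y i)) \<le> B"
    using sum_mono[of F "\<lambda>i. c i * dot (y i) (y i)" "\<lambda>i. c i * B"] c(2)
    by (simp flip: sum_distrib_right)
  then show "(\<Sum>i\<in>F. c i * dot (\<lambda>s. y i s - x s) (\<lambda>s. y i s - x s)) + dot x x \<le> B"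
    using convex_comb_spread[OF c(2) x] by simp
qed

lemma lex_max_in_Vert:
  assumes b: "b \<in> E"
    and max: "\<forall>x\<in>E. dot x r \<le> dot b r"
    and tie: "\<forall>x\<in>E. dot x r = dot b r \<longrightarrow> dot x x \<le> dot b b"
  shows "b \<in> Vert E"
proof -
  have "\<not> convex_comb_of (E - {b}) b"
  proof
    assume "convex_comb_of (E - {b}) b"
    then obtain F u where F: "finite F" "F \<subseteq> E - {b}"
      and u: "\<forall>x\<in>F. 0 \<le> u x" "(\<Sum>x\<in>F. u x) = 1" and bF: "b = (\<lambda>s. \<Sum>x\<in>F. u x * x s)"
      unfolding convex_comb_of_def by blast
    have "(\<Sum>x\<in>F. u x * dot (\<lambda>s. x s - b s) (\<lambda>s. x s - b s)) \<le> 0"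
      using convex_comb_lex_le(2)[of F u b "\<lambda>x. x" r "dot b r" "dot b b"] F u bF max tie by auto
    moreover have "\<forall>x\<in>F. 0 \<le> u x * dot (\<lambda>s. x s - b s) (\<lambda>s. x s - b s)"
      using u(1) by (simp add: dot_self_nonneg)
    ultimately have "\<forall>x\<in>F. u x * dot (\<lambda>s. x s - b s) (\<lambda>s. x s - b s) = 0"
      using sum_nonneg_eq_0_iff[OF F(1), of "\<lambda>x. u x * dot (\<lambda>s. x s - b s) (\<lambda>s. x s - b s)"]
        sum_nonneg[of F "\<lambda>x. u x * dot (\<lambda>s. x s - b s) (\<lambda>s. x s - b s)"]
      by (simp add: order_antisym_conv)
    moreover obtain x where "x \<in> F" "u x \<noteq> 0"
      using u(2) by (metis sum.neutral zero_neq_one)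
    ultimately have "dot (\<lambda>s. x s - b s) (\<lambda>s. x s - b s) = 0"
      by force
    then have "x = b"
      by (simp add: dot_self_eq_0_iff fun_eq_iff)
    with \<open>x \<in> F\<close> F(2) show False by blast
  qed
  with b show ?thesis unfolding Vert_def by blast
qed

text \<open>Among the maximisers in \<open>G\<close> take one of largest norm; by strict convexity of the norm it
  is not a convex combination of other points.  The zero vector is admitted separately since it
  represents the belief \<open>\<zero>\<close>.\<close>

lemma linear_max_at_Vert:
  assumes fin: "finite G" and ne: "G \<noteq> {}" and sub: "G \<subseteq> E"
    and spanned: "\<forall>x\<in>E. x = (\<lambda>_. 0) \<or> convex_comb_of G x"
    and nonneg: "\<forall>g\<in>G. 0 \<le> dot g r"
  shows "\<exists>b\<in>Vert E. \<forall>x\<in>E. dot x r \<le> dot b r"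
proof -
  obtain b where "is_arg_min (\<lambda>g. (- dot g r, - dot g g)) (\<lambda>g. g \<in> G) b"
    using ex_is_arg_min_if_finite[OF fin ne] by blast
  then have b: "b \<in> G" and "\<forall>g\<in>G. \<not> (- dot g r, - dot g g) < (- dot b r, - dot b b)"
    unfolding is_arg_min_def by blast+
  then have lex: "\<forall>g\<in>G. dot g r \<le> dot b r \<and> (dot g r = dot b r \<longrightarrow> dot g g \<le> dot b b)"
    by (auto simp: not_less)
  have bound: "dot x r \<le> dot b r \<and> (dot x r = dot b r \<longrightarrow> dot x x \<le> dot b b)" if xE: "x \<in> E" for x
  proof -
    consider "x = (\<lambda>_. 0)" | "convex_comb_of G x"
      using bspec[OF spanned xE] by (elim disjE)
    then show ?thesis
    proof cases
      case 1
      then show ?thesis using nonneg b dot_self_nonneg[of b] by simp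
    next
      case 2
      then obtain F u where F: "finite F" "F \<subseteq> G"
        and u: "\<forall>g\<in>F. 0 \<le> u g" "(\<Sum>g\<in>F. u g) = 1" and x: "x = (\<lambda>s. \<Sum>g\<in>F. u g * g s)"
        unfolding convex_comb_of_def by blast
      have "\<forall>g\<in>F. dot g r \<le> dot b r" "\<forall>g\<in>F. dot g r = dot b r \<longrightarrow> dot g g \<le> dot b b"
        using lex F(2) by blast+
      note spread = convex_comb_lex_le[of F u x "\<lambda>g. g", OF F(1) u x this]
      have "0 \<le> (\<Sum>g\<in>F. u g * dot (\<lambda>s. g s - x s) (\<lambda>s. g s - x s))"
        using u(1) by (simp add: sum_nonneg dot_self_nonneg)
      with spread show ?thesis by force
    qed
  qed
  have "b \<in> Vert E"
    using bound sub b by (intro lex_max_in_Vert) auto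
  with bound show ?thesis by blast
qed

definition normalized :: "('s::finite \<Rightarrow> real) \<Rightarrow> 's \<Rightarrow> real" where
  "normalized u s = u s / (\<Sum>t\<in>UNIV. u t)"

lemma normalized_zero [simp]: "normalized (\<lambda>_. 0) = (\<lambda>_. 0)"
  by (simp add: normalized_def fun_eq_iff)

lemma normalized_scale: "c \<noteq> 0 \<Longrightarrow> normalized (\<lambda>s. c * u s) = normalized u"
  unfolding normalized_def by (auto simp: fun_eq_iff simp flip: sum_distrib_left)

lemma normalized_nonneg: "\<forall>s. 0 \<le> u s \<Longrightarrow> 0 \<le> normalized u s"
  unfolding normalized_def by (simp add: sum_nonneg)

lemma nonneg_sum_eq_0_imp_zero:
  fixes u :: "'s::finite \<Rightarrow> real"
  shows "\<forall>s. 0 \<le> u s \<Longrightarrow> (\<Sum>t\<in>UNIV. u t) = 0 \<Longrightarrow> u = (\<lambda>_. 0)"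
  using sum_nonneg_eq_0_iff[of UNIV u] by auto

lemma sum_mult_normalized:
  fixes u :: "'s::finite \<Rightarrow> real"
  assumes "\<forall>s. 0 \<le> u s"
  shows "(\<Sum>t\<in>UNIV. u t) * normalized u s = u s"
  using nonneg_sum_eq_0_imp_zero[OF assms] unfolding normalized_def
  by (cases "(\<Sum>t\<in>UNIV. u t) = 0") auto

lemma convex_comb_of_image:
  fixes h :: "'i \<Rightarrow> 's::finite \<Rightarrow> real"
  assumes fin: "finite A" and sub: "h ` A \<subseteq> B"
    and w: "\<forall>p\<in>A. 0 \<le> w p" "(\<Sum>p\<in>A. w p) = 1"
  shows "convex_comb_of B (\<lambda>s. \<Sum>p\<in>A. w p * h p s)"
proof -
  define c where "c g = (\<Sum>p\<in>{p\<in>A. h p = g}. w p)" for g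
  have "\<forall>g\<in>h ` A. 0 \<le> c g"
    using w(1) unfolding c_def by (auto intro: sum_nonneg)
  moreover have "(\<Sum>g\<in>h ` A. c g) = 1"
    unfolding c_def using sum.image_gen[OF fin, of w h] w(2) by simp
  moreover have "(\<lambda>s. \<Sum>p\<in>A. w p * h p s) = (\<lambda>s. \<Sum>g\<in>h ` A. c g * g s)"
  proof
    fix s
    have "(\<Sum>g\<in>h ` A. c g * g s) = (\<Sum>g\<in>h ` A. \<Sum>p\<in>{p\<in>A. h p = g}. w p * h p s)"
      unfolding c_def sum_distrib_right by (rule sum.cong[OF refl]) auto
    also have "\<dots> = (\<Sum>p\<in>A. w p * h p s)"
      using sum.image_gen[OF fin, of "\<lambda>p. w p * h p s" h] by simp
    finally show "(\<Sum>p\<in>A. w p * h p s) = (\<Sum>g\<in>h ` A. c g * g s)" ..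
  qed
  ultimately show ?thesis
    unfolding convex_comb_of_def using fin sub by blast
qed

lemma convex_comb_of_normalized:
  assumes "convex_comb_of G u" and G_nonneg: "\<forall>g\<in>G. \<forall>s. 0 \<le> g s"
    and mass: "(\<Sum>t\<in>UNIV. u t) \<noteq> 0"
  shows "convex_comb_of (normalized ` G) (normalized u)"
proof -
  obtain F c where F: "finite F" "F \<subseteq> G" and c: "\<forall>g\<in>F. 0 \<le> c g" "(\<Sum>g\<in>F. c g) = 1"
    and u: "u = (\<lambda>s. \<Sum>g\<in>F. c g * g s)"
    using assms(1) unfolding convex_comb_of_def by blast
  have F_nonneg: "\<forall>s. 0 \<le> g s" if "g \<in> F" for g
    using that F(2) G_nonneg by blast
  define m where "m = (\<Sum>t\<in>UNIV. u t)"
  define d where "d g = c g * (\<Sum>t\<in>UNIV. g t) / m" for g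
  have m: "m = (\<Sum>g\<in>F. c g * (\<Sum>t\<in>UNIV. g t))"
    unfolding m_def u by (subst sum.swap) (simp add: sum_distrib_left)
  have "0 \<le> m"
    unfolding m using c(1) F_nonneg by (simp add: sum_nonneg)
  then have m_pos: "0 < m"
    using mass unfolding m_def by simp
  have "\<forall>g\<in>F. 0 \<le> d g"
    unfolding d_def using c(1) F_nonneg m_pos by (simp add: sum_nonneg)
  moreover have "(\<Sum>g\<in>F. d g) = 1"
    unfolding d_def using m m_pos by (simp flip: sum_divide_distrib)
  moreover have "normalized u = (\<lambda>s. \<Sum>g\<in>F. d g * normalized g s)"
  proof
    fix s
    have "u s = (\<Sum>g\<in>F. c g * ((\<Sum>t\<in>UNIV. g t) * normalized g s))"
      unfolding u using sum_mult_normalized[OF F_nonneg] by simp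
    then show "normalized u s = (\<Sum>g\<in>F. d g * normalized g s)"
      unfolding normalized_def[of u] d_def m_def[symmetric]
      by (simp add: sum_divide_distrib mult.assoc)
  qed
  ultimately show ?thesis
    using convex_comb_of_image[of F normalized "normalized ` G" d] F by auto
qed

text \<open>Linearity of expectation under the product distribution \<open>\<Prod>s. p s (f s)\<close>.\<close>

lemma sum_PiE_prod_mult_sum:
  fixes p h :: "'s::finite \<Rightarrow> 'a \<Rightarrow> real"
  assumes fin: "\<And>s. finite (B s)" and distr: "\<And>s. (\<Sum>\<alpha>\<in>B s. p s \<alpha>) = 1"
  shows "(\<Sum>f\<in>PiE UNIV B. (\<Prod>s\<in>UNIV. p s (f s)) * (\<Sum>s\<in>UNIV. h s (f s)))
       = (\<Sum>s\<in>UNIV. \<Sum>\<alpha>\<in>B s. p s \<alpha> * h s \<alpha>)"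
proof -
  have per_state: "(\<Sum>f\<in>PiE UNIV B. (\<Prod>s\<in>UNIV. p s (f s)) * h s0 (f s0))
      = (\<Sum>\<alpha>\<in>B s0. p s0 \<alpha> * h s0 \<alpha>)" for s0
  proof -
    define q where "q s \<alpha> = p s \<alpha> * (if s = s0 then h s0 \<alpha> else 1)" for s \<alpha>
    have "(\<Prod>s\<in>UNIV. q s (f s)) = (\<Prod>s\<in>UNIV. p s (f s)) * h s0 (f s0)" for f :: "'s \<Rightarrow> 'a"
      unfolding q_def prod.distrib by (simp add: prod.delta)
    then have "(\<Sum>f\<in>PiE UNIV B. (\<Prod>s\<in>UNIV. p s (f s)) * h s0 (f s0))
        = (\<Sum>f\<in>PiE UNIV B. \<Prod>s\<in>UNIV. q s (f s))"
      by simp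
    also have "\<dots> = (\<Prod>s\<in>UNIV. \<Sum>\<alpha>\<in>B s. q s \<alpha>)"
      by (rule prod_sum_PiE[symmetric]) (auto simp: fin)
    also have "\<dots> = (\<Prod>s\<in>UNIV. if s = s0 then (\<Sum>\<alpha>\<in>B s0. p s0 \<alpha> * h s0 \<alpha>) else 1)"
      by (rule prod.cong[OF refl]) (auto simp: q_def distr)
    finally show ?thesis
      by (simp add: prod.delta)
  qed
  have "(\<Sum>f\<in>PiE UNIV B. (\<Prod>s\<in>UNIV. p s (f s)) * (\<Sum>s\<in>UNIV. h s (f s)))
      = (\<Sum>f\<in>PiE UNIV B. \<Sum>s0\<in>UNIV. (\<Prod>s\<in>UNIV. p s (f s)) * h s0 (f s0))"
    by (simp add: sum_distrib_left)
  also have "\<dots> = (\<Sum>s0\<in>UNIV. \<Sum>f\<in>PiE UNIV B. (\<Prod>s\<in>UNIV. p s (f s)) * h s0 (f s0))"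
    by (rule sum.swap)
  finally show ?thesis
    by (simp add: per_state)
qed

section \<open>Unnormalized beliefs\<close>

definition dirac_rule :: "('s \<Rightarrow> 'a) \<Rightarrow> 's \<Rightarrow> 'a \<Rightarrow> real" where
  "dirac_rule f s \<alpha> = (if \<alpha> = f s then 1 else 0)"

locale mdp =
  fixes iota :: "'s::finite \<Rightarrow> real"
    and P :: "'s \<Rightarrow> 'a::finite \<Rightarrow> ('s \<Rightarrow> real) option"
    and obs :: "'s \<Rightarrow> 'z::finite \<Rightarrow> real"
  assumes is_mdp: "is_mdp iota P obs"
begin

lemma iota_nonneg: "0 \<le> iota s"
  using is_mdp unfolding is_mdp_def is_distr_def by auto

lemma obs_nonneg: "0 \<le> obs s z"
  using is_mdp unfolding is_mdp_def is_distr_def by auto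

lemma Ptr_nonneg: "0 \<le> Ptr P s \<alpha> t"
  using is_mdp unfolding is_mdp_def is_distr_def Ptr_def by (auto split: option.splits)

definition decision_rule :: "('s \<Rightarrow> 'a \<Rightarrow> real) \<Rightarrow> bool" where
  "decision_rule \<delta> \<longleftrightarrow> (\<forall>s. is_distr (\<delta> s) \<and> (\<forall>\<alpha>. \<delta> s \<alpha> > 0 \<longrightarrow> \<alpha> \<in> AvAct P s))"

definition selectors :: "('s \<Rightarrow> 'a) set" where
  "selectors = PiE UNIV (AvAct P)"

lemma finite_selectors: "finite selectors"
  unfolding selectors_def by simp

lemma selectors_nonempty: "selectors \<noteq> {}"
  using is_mdp unfolding selectors_def is_mdp_def by (simp add: PiE_eq_empty_iff)

lemma decision_rule_dirac_rule: "f \<in> selectors \<Longrightarrow> decision_rule (dirac_rule f)"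
  unfolding decision_rule_def dirac_rule_def selectors_def is_distr_def by (auto simp: PiE_iff)

lemma decision_rule_nonneg: "decision_rule \<delta> \<Longrightarrow> 0 \<le> \<delta> s \<alpha>"
  unfolding decision_rule_def is_distr_def by auto

lemma decision_rule_eq_0: "decision_rule \<delta> \<Longrightarrow> \<alpha> \<notin> AvAct P s \<Longrightarrow> \<delta> s \<alpha> = 0"
  using decision_rule_nonneg[of \<delta> s \<alpha>] unfolding decision_rule_def by force

lemma decision_rule_sum_AvAct: "decision_rule \<delta> \<Longrightarrow> (\<Sum>\<alpha>\<in>AvAct P s. \<delta> s \<alpha>) = 1"
proof -
  assume \<delta>: "decision_rule \<delta>"
  have "(\<Sum>\<alpha>\<in>AvAct P s. \<delta> s \<alpha>) = (\<Sum>\<alpha>\<in>UNIV. \<delta> s \<alpha>)"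
    by (rule sum.mono_neutral_left) (auto simp: decision_rule_eq_0[OF \<delta>])
  also have "\<dots> = 1"
    using \<delta> unfolding decision_rule_def is_distr_def by auto
  finally show ?thesis .
qed

text \<open>The normalizing denominators of \<open>est_up\<close> are dropped; like \<open>est_rev\<close>, the sets are indexed
  by the reversed trace.\<close>

definition ubel_init :: "'z \<Rightarrow> 's \<Rightarrow> real" where
  "ubel_init z s = iota s * obs s z"

definition ubel_update :: "('s \<Rightarrow> real) \<Rightarrow> ('s \<Rightarrow> 'a \<Rightarrow> real) \<Rightarrow> 'z \<Rightarrow> 's \<Rightarrow> real" where
  "ubel_update u \<delta> z s' = (\<Sum>s\<in>UNIV. u s * (\<Sum>\<alpha>\<in>UNIV. \<delta> s \<alpha> * Ptr P s \<alpha> s' * obs s' z))"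

fun ubels_rev :: "'z list \<Rightarrow> ('s \<Rightarrow> real) set" where
  "ubels_rev [] = {}"
| "ubels_rev [z] = {ubel_init z}"
| "ubels_rev (z # y # ys) =
     {ubel_update u \<delta> z | u \<delta>. u \<in> ubels_rev (y # ys) \<and> decision_rule \<delta>}"

fun det_ubels_rev :: "'z list \<Rightarrow> ('s \<Rightarrow> real) set" where
  "det_ubels_rev [] = {}"
| "det_ubels_rev [z] = {ubel_init z}"
| "det_ubels_rev (z # y # ys) =
     (\<lambda>(u, f). ubel_update u (dirac_rule f) z) ` (det_ubels_rev (y # ys) \<times> selectors)"

lemma ubel_update_nonneg: "\<forall>s. 0 \<le> u s \<Longrightarrow> decision_rule \<delta> \<Longrightarrow> 0 \<le> ubel_update u \<delta> z s'"
  unfolding ubel_update_def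
  by (intro sum_nonneg mult_nonneg_nonneg) (auto simp: decision_rule_nonneg Ptr_nonneg obs_nonneg)

lemma ubels_rev_nonneg: "u \<in> ubels_rev ys \<Longrightarrow> 0 \<le> u s"
proof (induction ys arbitrary: u s rule: ubels_rev.induct)
  case (2 z)
  then show ?case by (auto simp: ubel_init_def iota_nonneg obs_nonneg)
next
  case (3 z y ys)
  then show ?case using ubel_update_nonneg by auto
qed auto

lemma det_ubels_rev_subset: "det_ubels_rev ys \<subseteq> ubels_rev ys"
proof (induction ys rule: det_ubels_rev.induct)
  case (3 z y ys)
  then show ?case using decision_rule_dirac_rule by fastforce
qed auto

lemma finite_det_ubels_rev: "finite (det_ubels_rev ys)"
  by (induction ys rule: det_ubels_rev.induct) (auto simp: finite_selectors)

lemma det_ubels_rev_nonempty: "ys \<noteq> [] \<Longrightarrow> det_ubels_rev ys \<noteq> {}"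
  by (induction ys rule: det_ubels_rev.induct) (auto simp: selectors_nonempty)

lemma ubel_update_dirac_rule:
  "ubel_update u (dirac_rule f) z s' = (\<Sum>s\<in>UNIV. u s * Ptr P s (f s) s' * obs s' z)"
proof -
  have "(\<Sum>\<alpha>\<in>UNIV. dirac_rule f s \<alpha> * Ptr P s \<alpha> s' * obs s' z) = Ptr P s (f s) s' * obs s' z" for s
    unfolding dirac_rule_def by (simp add: if_distrib[of "\<lambda>x. x * _"] cong: if_cong)
  then show ?thesis
    unfolding ubel_update_def by (simp add: mult.assoc)
qed

lemma ubel_update_mixture:
  assumes \<delta>: "decision_rule \<delta>"
  shows "ubel_update u \<delta> z s'
           = (\<Sum>f\<in>selectors. (\<Prod>s\<in>UNIV. \<delta> s (f s)) * ubel_update u (dirac_rule f) z s')"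
proof -
  define h where "h s \<alpha> = u s * Ptr P s \<alpha> s' * obs s' z" for s \<alpha>
  have "ubel_update u \<delta> z s' = (\<Sum>s\<in>UNIV. \<Sum>\<alpha>\<in>UNIV. \<delta> s \<alpha> * h s \<alpha>)"
    unfolding ubel_update_def h_def by (simp add: sum_distrib_left algebra_simps)
  also have "\<dots> = (\<Sum>s\<in>UNIV. \<Sum>\<alpha>\<in>AvAct P s. \<delta> s \<alpha> * h s \<alpha>)"
    by (intro sum.cong[OF refl] sum.mono_neutral_right) (auto simp: decision_rule_eq_0[OF \<delta>])
  also have "\<dots> = (\<Sum>f\<in>selectors. (\<Prod>s\<in>UNIV. \<delta> s (f s)) * (\<Sum>s\<in>UNIV. h s (f s)))"
    unfolding selectors_def
    by (rule sum_PiE_prod_mult_sum[symmetric]) (auto simp: decision_rule_sum_AvAct[OF \<delta>])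
  finally show ?thesis
    by (simp add: ubel_update_dirac_rule h_def)
qed

lemma ubel_update_comb:
  "ubel_update (\<lambda>s. \<Sum>g\<in>G. c g * g s) \<delta> z s' = (\<Sum>g\<in>G. c g * ubel_update g \<delta> z s')"
  unfolding ubel_update_def
  by (simp add: sum_distrib_left sum_distrib_right mult.assoc sum.swap[of _ G])

lemma convex_comb_of_ubels_rev: "u \<in> ubels_rev ys \<Longrightarrow> convex_comb_of (det_ubels_rev ys) u"
proof (induction ys arbitrary: u rule: ubels_rev.induct)
  case (2 z)
  then show ?case
    unfolding convex_comb_of_def by (intro exI[of _ "{ubel_init z}"] exI[of _ "\<lambda>_. 1"]) auto
next
  case (3 z y ys)
  then obtain v \<delta> where u: "u = ubel_update v \<delta> z" and v: "v \<in> ubels_rev (y # ys)"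
    and \<delta>: "decision_rule \<delta>"
    by auto
  obtain F c where F: "finite F" "F \<subseteq> det_ubels_rev (y # ys)"
    and c: "\<forall>g\<in>F. 0 \<le> c g" "(\<Sum>g\<in>F. c g) = 1" and vF: "v = (\<lambda>s. \<Sum>g\<in>F. c g * g s)"
    using "3.IH"[OF v] unfolding convex_comb_of_def by blast
  define \<nu> where "\<nu> f = (\<Prod>s\<in>UNIV. \<delta> s (f s))" for f :: "'s \<Rightarrow> 'a"
  define w where "w p = c (fst p) * \<nu> (snd p)" for p :: "('s \<Rightarrow> real) \<times> ('s \<Rightarrow> 'a)"
  define h where "h p = ubel_update (fst p) (dirac_rule (snd p)) z"
    for p :: "('s \<Rightarrow> real) \<times> ('s \<Rightarrow> 'a)"
  have \<nu>_sum: "(\<Sum>f\<in>selectors. \<nu> f) = 1"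
    unfolding \<nu>_def selectors_def
    by (simp add: decision_rule_sum_AvAct[OF \<delta>] flip: prod_sum_PiE)
  have "convex_comb_of (det_ubels_rev (z # y # ys)) (\<lambda>s. \<Sum>p\<in>F \<times> selectors. w p * h p s)"
  proof (rule convex_comb_of_image)
    show "finite (F \<times> selectors)"
      using F(1) finite_selectors by simp
    show "h ` (F \<times> selectors) \<subseteq> det_ubels_rev (z # y # ys)"
      using F(2) unfolding h_def by force
    show "\<forall>p\<in>F \<times> selectors. 0 \<le> w p"
      using c(1) decision_rule_nonneg[OF \<delta>] unfolding w_def \<nu>_def
      by (auto intro!: mult_nonneg_nonneg prod_nonneg)
    have "(\<Sum>p\<in>F \<times> selectors. w p) = (\<Sum>g\<in>F. c g * (\<Sum>f\<in>selectors. \<nu> f))"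
      unfolding w_def by (simp add: sum.cartesian_product split_def sum_distrib_left)
    then show "(\<Sum>p\<in>F \<times> selectors. w p) = 1"
      using c(2) \<nu>_sum by simp
  qed
  moreover have "u = (\<lambda>s. \<Sum>p\<in>F \<times> selectors. w p * h p s)"
  proof
    fix s'
    have "u s' = (\<Sum>g\<in>F. c g * (\<Sum>f\<in>selectors. \<nu> f * ubel_update g (dirac_rule f) z s'))"
      unfolding u vF ubel_update_comb \<nu>_def ubel_update_mixture[OF \<delta>] ..
    then show "u s' = (\<Sum>p\<in>F \<times> selectors. w p * h p s')"
      by (simp add: sum.cartesian_product split_def w_def h_def sum_distrib_left mult.assoc)
  qed
  ultimately show ?case by simp
qed auto

lemma ubel_update_mass:
  "(\<Sum>s'\<in>UNIV. ubel_update u \<delta> z s')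
     = (\<Sum>s\<in>UNIV. u s * (\<Sum>\<alpha>\<in>UNIV. \<delta> s \<alpha> * (\<Sum>t\<in>UNIV. Ptr P s \<alpha> t * obs t z)))"
proof -
  have "(\<Sum>s'\<in>UNIV. ubel_update u \<delta> z s')
      = (\<Sum>s'\<in>UNIV. \<Sum>s\<in>UNIV. \<Sum>\<alpha>\<in>UNIV. u s * \<delta> s \<alpha> * (Ptr P s \<alpha> s' * obs s' z))"
    unfolding ubel_update_def by (simp add: sum_distrib_left mult.assoc)
  also have "\<dots> = (\<Sum>s\<in>UNIV. \<Sum>s'\<in>UNIV. \<Sum>\<alpha>\<in>UNIV. u s * \<delta> s \<alpha> * (Ptr P s \<alpha> s' * obs s' z))"
    by (rule sum.swap)
  also have "\<dots> = (\<Sum>s\<in>UNIV. \<Sum>\<alpha>\<in>UNIV. \<Sum>s'\<in>UNIV. u s * \<delta> s \<alpha> * (Ptr P s \<alpha> s' * obs s' z))"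
    by (rule sum.cong[OF refl], rule sum.swap)
  finally show ?thesis
    by (simp add: sum_distrib_left mult.assoc)
qed

lemma est_up_eq: "est_up P obs b z = {normalized (ubel_update b \<delta> z) | \<delta>. decision_rule \<delta>}"
proof -
  have "normalized (ubel_update b \<delta> z) = (\<lambda>s'.
      (\<Sum>s\<in>UNIV. b s * (\<Sum>\<alpha>\<in>UNIV. \<delta> s \<alpha> * Ptr P s \<alpha> s' * obs s' z)) /
      (\<Sum>s\<in>UNIV. b s * (\<Sum>\<alpha>\<in>UNIV. \<delta> s \<alpha> * (\<Sum>t\<in>UNIV. Ptr P s \<alpha> t * obs t z))))" for \<delta>
    unfolding normalized_def ubel_update_mass by (simp add: ubel_update_def)
  then show ?thesis
    unfolding est_up_def decision_rule_def by (auto simp: fun_eq_iff)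
qed

lemma normalized_ubel_update_normalized:
  assumes "\<forall>s. 0 \<le> u s"
  shows "normalized (ubel_update (normalized u) \<delta> z) = normalized (ubel_update u \<delta> z)"
proof (cases "(\<Sum>t\<in>UNIV. u t) = 0")
  case True
  then have "u = (\<lambda>_. 0)"
    using nonneg_sum_eq_0_imp_zero[OF assms] by simp
  then show ?thesis
    by simp
next
  case False
  define c where "c = 1 / (\<Sum>t\<in>UNIV. u t)"
  have "ubel_update (normalized u) \<delta> z = (\<lambda>s'. c * ubel_update u \<delta> z s')"
    unfolding normalized_def ubel_update_def c_def by (simp add: sum_distrib_left mult.assoc)
  moreover have "c \<noteq> 0"
    using False unfolding c_def by simp
  ultimately show ?thesis
    by (simp add: normalized_scale)
qed

lemma est_rev_eq_normalized: "ys \<noteq> [] \<Longrightarrow> est_rev iota P obs ys = normalized ` ubels_rev ys"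
proof (induction ys rule: ubels_rev.induct)
  case (2 z)
  then show ?case
    by (simp add: bel_init_def normalized_def ubel_init_def fun_eq_iff)
next
  case (3 z y ys)
  have "est_rev iota P obs (z # y # ys) = (\<Union>u\<in>ubels_rev (y # ys). est_up P obs (normalized u) z)"
    using "3.IH" by simp
  also have "\<dots> = (\<Union>u\<in>ubels_rev (y # ys).
      {normalized (ubel_update u \<delta> z) | \<delta>. decision_rule \<delta>})"
    by (simp add: est_up_eq normalized_ubel_update_normalized ubels_rev_nonneg)
  also have "\<dots> = normalized ` ubels_rev (z # y # ys)"
    by auto
  finally show ?case .
qed auto

lemma est_MDP_spanned:
  assumes "\<tau> \<noteq> []"
  obtains G where "finite G" "G \<noteq> {}" "G \<subseteq> est_MDP iota P obs \<tau>"
    and "\<forall>b\<in>est_MDP iota P obs \<tau>. b = (\<lambda>_. 0) \<or> convex_comb_of G b"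
    and "\<forall>g\<in>G. \<forall>s. 0 \<le> g s"
proof
  let ?G = "normalized ` det_ubels_rev (rev \<tau>)"
  have est: "est_MDP iota P obs \<tau> = normalized ` ubels_rev (rev \<tau>)"
    unfolding est_MDP_def using assms by (simp add: est_rev_eq_normalized)
  show "finite ?G"
    by (simp add: finite_det_ubels_rev)
  show "?G \<noteq> {}"
    using assms by (simp add: det_ubels_rev_nonempty)
  show "?G \<subseteq> est_MDP iota P obs \<tau>"
    unfolding est using det_ubels_rev_subset by blast
  show "\<forall>g\<in>?G. \<forall>s. 0 \<le> g s"
    using det_ubels_rev_subset ubels_rev_nonneg by (blast intro: normalized_nonneg)
  show "\<forall>b\<in>est_MDP iota P obs \<tau>. b = (\<lambda>_. 0) \<or> convex_comb_of ?G b"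
  proof
    fix b assume "b \<in> est_MDP iota P obs \<tau>"
    then obtain u where u: "u \<in> ubels_rev (rev \<tau>)" and b: "b = normalized u"
      unfolding est by blast
    have u_nonneg: "\<forall>s. 0 \<le> u s"
      using u ubels_rev_nonneg by blast
    show "b = (\<lambda>_. 0) \<or> convex_comb_of ?G b"
    proof (cases "(\<Sum>t\<in>UNIV. u t) = 0")
      case True
      then show ?thesis
        using nonneg_sum_eq_0_imp_zero[OF u_nonneg] b by simp
    next
      case False
      have "\<forall>g\<in>det_ubels_rev (rev \<tau>). \<forall>s. 0 \<le> g s"
        using det_ubels_rev_subset ubels_rev_nonneg by blast
      then show ?thesis
        using convex_comb_of_normalized[OF convex_comb_of_ubels_rev[OF u] _ False] b by simp
    qed
  qed
qed

section \<open>Schedulers and unnormalized beliefs\<close>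

lemma finite_Paths: "finite (Paths iota P \<tau>)"
proof (rule finite_subset)
  show "Paths iota P \<tau> \<subseteq> {ss. set ss \<subseteq> UNIV \<and> length ss = length \<tau>}
      \<times> {as. set as \<subseteq> UNIV \<and> length as = length \<tau> - 1}"
    unfolding Paths_def is_path_def by (auto simp: Let_def)
  show "finite ({ss :: 's list. set ss \<subseteq> UNIV \<and> length ss = length \<tau>}
      \<times> {as :: 'a list. set as \<subseteq> UNIV \<and> length as = length \<tau> - 1})"
    by (intro finite_cartesian_product finite_lists_length_eq) auto
qed

lemma is_path_length: "is_path iota P (ss, as) \<Longrightarrow> length ss = length as + 1"
  unfolding is_path_def by (simp add: Let_def)

lemma is_path_snoc_iff:
  assumes len: "length ss = length as + 1"
  shows "is_path iota P (ss @ [s'], as @ [\<alpha>]) \<longleftrightarrow>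
     is_path iota P (ss, as) \<and> P (last ss) \<alpha> \<noteq> None \<and> Ptr P (last ss) \<alpha> s' > 0"
proof -
  let ?step = "\<lambda>ss as i. P (ss ! i) (as ! i) \<noteq> None \<and> Ptr P (ss ! i) (as ! i) (ss ! Suc i) > 0"
  have last: "last ss = ss ! length as"
    using len by (cases ss rule: rev_cases) (auto simp: nth_append)
  have "(\<forall>i < Suc (length as). ?step (ss @ [s']) (as @ [\<alpha>]) i)
      \<longleftrightarrow> (\<forall>i < length as. ?step ss as i) \<and> P (last ss) \<alpha> \<noteq> None \<and> Ptr P (last ss) \<alpha> s' > 0"
    unfolding All_less_Suc using len last by (auto simp: nth_append)
  moreover have "(ss @ [s']) ! 0 = ss ! 0"
    using len by (simp add: nth_append)
  ultimately show ?thesis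
    unfolding is_path_def Let_def using len by auto
qed

lemma Pr_path_snoc:
  assumes len: "length ss = length as + 1"
  shows "Pr_path iota P \<sigma> (ss @ [s'], as @ [\<alpha>])
           = Pr_path iota P \<sigma> (ss, as) * (\<sigma> ss as \<alpha> * Ptr P (last ss) \<alpha> s')"
proof -
  let ?factor = "\<lambda>ss as i.
    \<sigma> (take (Suc i) ss) (take i as) (as ! i) * Ptr P (ss ! i) (as ! i) (ss ! Suc i)"
  have last: "last ss = ss ! length as"
    using len by (cases ss rule: rev_cases) (auto simp: nth_append)
  have "(\<Prod>i<length as. ?factor (ss @ [s']) (as @ [\<alpha>]) i) = (\<Prod>i<length as. ?factor ss as i)"
    using len by (intro prod.cong) (auto simp: nth_append)
  moreover have "?factor (ss @ [s']) (as @ [\<alpha>]) (length as) = \<sigma> ss as \<alpha> * Ptr P (last ss) \<alpha> s'"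
    using len last by (simp add: nth_append)
  moreover have "(ss @ [s']) ! 0 = ss ! 0"
    using len by (simp add: nth_append)
  ultimately show ?thesis
    unfolding Pr_path_def Let_def by (simp add: mult.assoc)
qed

lemma Pr_obs_snoc:
  assumes len: "length ss = length \<tau>"
  shows "Pr_obs obs (\<tau> @ [z]) (ss @ [s'], as @ [\<alpha>]) = Pr_obs obs \<tau> (ss, as) * obs s' z"
proof -
  have "(\<Prod>i<length \<tau>. obs ((ss @ [s']) ! i) ((\<tau> @ [z]) ! i))
      = (\<Prod>i<length \<tau>. obs (ss ! i) (\<tau> ! i))"
    using len by (intro prod.cong) (auto simp: nth_append)
  then show ?thesis
    unfolding Pr_obs_def using len by (simp add: nth_append)
qed

lemma is_path_take:
  assumes p: "is_path iota P (ss, as)" and i: "i < length as"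
  shows "is_path iota P (take (Suc i) ss, take i as)"
  using p i unfolding is_path_def Let_def by auto

lemma Pr_path_nonneg:
  assumes s: "is_scheduler iota P \<sigma>" and p: "is_path iota P (ss, as)"
  shows "0 \<le> Pr_path iota P \<sigma> (ss, as)"
proof -
  have "0 \<le> \<sigma> (take (Suc i) ss) (take i as) (as ! i)" if "i < length as" for i
    using s is_path_take[OF p that] unfolding is_scheduler_def is_distr_def by blast
  then show ?thesis unfolding Pr_path_def Let_def
    by (auto intro!: mult_nonneg_nonneg prod_nonneg iota_nonneg Ptr_nonneg)
qed

lemma Pr_obs_nonneg: "0 \<le> Pr_obs obs \<tau> \<pi>"
  unfolding Pr_obs_def by (auto intro!: prod_nonneg obs_nonneg)

definition state_weight :: "('s list \<Rightarrow> 'a list \<Rightarrow> 'a \<Rightarrow> real) \<Rightarrow> 'z list \<Rightarrow> 's \<Rightarrow> real" where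
  "state_weight \<sigma> \<tau> s =
     (\<Sum>\<pi>\<in>{\<pi>\<in>Paths iota P \<tau>. last (fst \<pi>) = s}. Pr_path iota P \<sigma> \<pi> * Pr_obs obs \<tau> \<pi>)"

definition action_weight ::
  "('s list \<Rightarrow> 'a list \<Rightarrow> 'a \<Rightarrow> real) \<Rightarrow> 'z list \<Rightarrow> 's \<Rightarrow> 'a \<Rightarrow> real" where
  "action_weight \<sigma> \<tau> s \<alpha> = (\<Sum>\<pi>\<in>{\<pi>\<in>Paths iota P \<tau>. last (fst \<pi>) = s}.
     Pr_path iota P \<sigma> \<pi> * Pr_obs obs \<tau> \<pi> * \<sigma> (fst \<pi>) (snd \<pi>) \<alpha>)"

lemma Paths_snoc_last:
  assumes "\<tau> \<noteq> []"
  shows "{\<pi>\<in>Paths iota P (\<tau> @ [z]). last (fst \<pi>) = s'} =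
    (\<lambda>(\<pi>, \<alpha>). (fst \<pi> @ [s'], snd \<pi> @ [\<alpha>])) `
      {(\<pi>, \<alpha>). \<pi> \<in> Paths iota P \<tau> \<and> P (last (fst \<pi>)) \<alpha> \<noteq> None \<and> Ptr P (last (fst \<pi>)) \<alpha> s' > 0}"
  (is "?L = ?R")
proof
  show "?R \<subseteq> ?L"
  proof
    fix x
    assume "x \<in> ?R"
    then obtain ss as \<alpha> where x: "x = (ss @ [s'], as @ [\<alpha>])" and p: "(ss, as) \<in> Paths iota P \<tau>"
      and "P (last ss) \<alpha> \<noteq> None" "Ptr P (last ss) \<alpha> s' > 0"
      by auto
    moreover have len: "length ss = length as + 1"
      using p is_path_length unfolding Paths_def by auto
    ultimately show "x \<in> ?L"
      using is_path_snoc_iff[OF len] unfolding x Paths_def by auto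
  qed
  show "?L \<subseteq> ?R"
  proof
    fix x
    assume "x \<in> ?L"
    then obtain ss2 as2 where x: "x = (ss2, as2)" and p2: "is_path iota P (ss2, as2)"
      and l2: "length ss2 = length \<tau> + 1" and ls: "last ss2 = s'"
      unfolding Paths_def by (cases x) auto
    have "length as2 = length \<tau>"
      using is_path_length[OF p2] l2 by simp
    then obtain as \<alpha> where as2: "as2 = as @ [\<alpha>]"
      using assms by (cases as2 rule: rev_cases) auto
    obtain ss where ss2: "ss2 = ss @ [s']"
      using l2 ls by (cases ss2 rule: rev_cases) auto
    have len: "length ss = length as + 1" and "length ss = length \<tau>"
      using l2 \<open>length as2 = length \<tau>\<close> unfolding ss2 as2 by simp_all
    then show "x \<in> ?R"
      using p2 is_path_snoc_iff[OF len] unfolding x ss2 as2 Paths_def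
      by (auto intro!: image_eqI[of _ _ "((ss, as), \<alpha>)"])
  qed
qed

lemma path_weight_snoc:
  assumes "(ss, as) \<in> Paths iota P \<tau>"
  shows "Pr_path iota P \<sigma> (ss @ [s'], as @ [\<alpha>]) * Pr_obs obs (\<tau> @ [z]) (ss @ [s'], as @ [\<alpha>])
    = Pr_path iota P \<sigma> (ss, as) * Pr_obs obs \<tau> (ss, as) * \<sigma> ss as \<alpha>
        * (Ptr P (last ss) \<alpha> s' * obs s' z)"
proof -
  have len: "length ss = length as + 1" and len_\<tau>: "length ss = length \<tau>"
    using assms is_path_length unfolding Paths_def by auto
  have "Pr_obs obs (\<tau> @ [z]) (ss @ [s'], as @ [\<alpha>]) = Pr_obs obs \<tau> (ss, as) * obs s' z"
    by (rule Pr_obs_snoc[OF len_\<tau>])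
  then show ?thesis
    using Pr_path_snoc[OF len] by (simp add: algebra_simps)
qed

lemma state_weight_snoc_Paths:
  assumes "\<tau> \<noteq> []"
  shows "state_weight \<sigma> (\<tau> @ [z]) s' = (\<Sum>\<pi>\<in>Paths iota P \<tau>. \<Sum>\<alpha>\<in>UNIV.
    Pr_path iota P \<sigma> \<pi> * Pr_obs obs \<tau> \<pi> * \<sigma> (fst \<pi>) (snd \<pi>) \<alpha>
      * (Ptr P (last (fst \<pi>)) \<alpha> s' * obs s' z))"
proof -
  define H where "H \<pi> \<alpha> = Pr_path iota P \<sigma> \<pi> * Pr_obs obs \<tau> \<pi> * \<sigma> (fst \<pi>) (snd \<pi>) \<alpha>
      * (Ptr P (last (fst \<pi>)) \<alpha> s' * obs s' z)" for \<pi> \<alpha>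
  define A where "A = {(\<pi>, \<alpha>). \<pi> \<in> Paths iota P \<tau> \<and> P (last (fst \<pi>)) \<alpha> \<noteq> None
      \<and> Ptr P (last (fst \<pi>)) \<alpha> s' > 0}"
  define ext where "ext = (\<lambda>(\<pi> :: 's list \<times> 'a list, \<alpha> :: 'a). (fst \<pi> @ [s'], snd \<pi> @ [\<alpha>]))"
  have "state_weight \<sigma> (\<tau> @ [z]) s' = (\<Sum>x\<in>ext ` A. Pr_path iota P \<sigma> x * Pr_obs obs (\<tau> @ [z]) x)"
    unfolding state_weight_def Paths_snoc_last[OF assms] A_def ext_def by simp
  also have "\<dots> = (\<Sum>(\<pi>, \<alpha>)\<in>A. H \<pi> \<alpha>)"
    by (rule sum.reindex_cong[of ext]) (auto simp: inj_on_def ext_def A_def H_def path_weight_snoc)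
  also have "\<dots> = (\<Sum>(\<pi>, \<alpha>)\<in>Paths iota P \<tau> \<times> UNIV. H \<pi> \<alpha>)"
  proof (rule sum.mono_neutral_left)
    show "finite (Paths iota P \<tau> \<times> (UNIV :: 'a set))"
      by (simp add: finite_Paths)
    show "\<forall>p\<in>Paths iota P \<tau> \<times> UNIV - A. (case p of (\<pi>, \<alpha>) \<Rightarrow> H \<pi> \<alpha>) = 0"
    proof
      fix p
      assume p: "p \<in> Paths iota P \<tau> \<times> UNIV - A"
      obtain \<pi> \<alpha> where p_eq: "p = (\<pi>, \<alpha>)"
        by fastforce
      have "Ptr P (last (fst \<pi>)) \<alpha> s' = 0"
        using p Ptr_nonneg[of "last (fst \<pi>)" \<alpha> s'] unfolding p_eq A_def Ptr_def
        by (auto split: option.splits)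
      then show "(case p of (\<pi>, \<alpha>) \<Rightarrow> H \<pi> \<alpha>) = 0"
        unfolding p_eq H_def by simp
    qed
  qed (auto simp: A_def)
  finally show ?thesis
    unfolding H_def by (simp add: sum.cartesian_product)
qed

lemma state_weight_snoc:
  assumes "\<tau> \<noteq> []"
  shows "state_weight \<sigma> (\<tau> @ [z]) s'
           = (\<Sum>s\<in>UNIV. \<Sum>\<alpha>\<in>UNIV. action_weight \<sigma> \<tau> s \<alpha> * Ptr P s \<alpha> s' * obs s' z)"
proof -
  have "state_weight \<sigma> (\<tau> @ [z]) s' = (\<Sum>s\<in>UNIV. \<Sum>\<pi>\<in>{\<pi>\<in>Paths iota P \<tau>. last (fst \<pi>) = s}.
      \<Sum>\<alpha>\<in>UNIV. Pr_path iota P \<sigma> \<pi> * Pr_obs obs \<tau> \<pi> * \<sigma> (fst \<pi>) (snd \<pi>) \<alpha>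
        * (Ptr P s \<alpha> s' * obs s' z))"
    unfolding state_weight_snoc_Paths[OF assms]
    by (subst sum.group[symmetric, where g = "\<lambda>\<pi>. last (fst \<pi>)" and T = UNIV])
      (auto simp: finite_Paths intro!: sum.cong)
  also have "\<dots> = (\<Sum>s\<in>UNIV. \<Sum>\<alpha>\<in>UNIV. \<Sum>\<pi>\<in>{\<pi>\<in>Paths iota P \<tau>. last (fst \<pi>) = s}.
      Pr_path iota P \<sigma> \<pi> * Pr_obs obs \<tau> \<pi> * \<sigma> (fst \<pi>) (snd \<pi>) \<alpha> * (Ptr P s \<alpha> s' * obs s' z))"
    by (rule sum.cong[OF refl], rule sum.swap)
  finally show ?thesis
    unfolding action_weight_def by (simp add: sum_distrib_right mult.assoc)
qed

lemma state_weight_singleton: "state_weight \<sigma> [z] = ubel_init z"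
proof
  fix s
  have "{\<pi>\<in>Paths iota P [z]. last (fst \<pi>) = s} = (if iota s > 0 then {([s], [])} else {})"
  proof -
    have "\<pi> \<in> Paths iota P [z] \<and> last (fst \<pi>) = s \<longleftrightarrow> iota s > 0 \<and> \<pi> = ([s], [])"
      for \<pi> :: "'s list \<times> 'a list"
    proof -
      obtain ss as where p: "\<pi> = (ss, as)" by fastforce
      show ?thesis unfolding p Paths_def is_path_def Let_def
        by (cases ss; cases as) auto
    qed
    then show ?thesis by auto
  qed
  moreover have "Pr_path iota P \<sigma> ([s], []) = iota s" unfolding Pr_path_def by simp
  moreover have "Pr_obs obs [z] ([s], []) = obs s z" unfolding Pr_obs_def by simp
  ultimately show "state_weight \<sigma> [z] s = ubel_init z s"
    unfolding state_weight_def ubel_init_def using iota_nonneg[of s] by auto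
qed

lemma scheduler_nonneg:
  "is_scheduler iota P \<sigma> \<Longrightarrow> \<pi> \<in> Paths iota P \<tau> \<Longrightarrow> 0 \<le> \<sigma> (fst \<pi>) (snd \<pi>) \<alpha>"
  unfolding is_scheduler_def Paths_def is_distr_def by (cases \<pi>) auto

lemma scheduler_sum:
  "is_scheduler iota P \<sigma> \<Longrightarrow> \<pi> \<in> Paths iota P \<tau> \<Longrightarrow> (\<Sum>\<alpha>\<in>UNIV. \<sigma> (fst \<pi>) (snd \<pi>) \<alpha>) = 1"
  unfolding is_scheduler_def Paths_def is_distr_def by (cases \<pi>) auto

lemma scheduler_eq_0:
  assumes "is_scheduler iota P \<sigma>" "\<pi> \<in> Paths iota P \<tau>" "\<alpha> \<notin> AvAct P (last (fst \<pi>))"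
  shows "\<sigma> (fst \<pi>) (snd \<pi>) \<alpha> = 0"
  using assms scheduler_nonneg[OF assms(1,2), of \<alpha>] unfolding is_scheduler_def Paths_def
  by (cases \<pi>) force

lemma scheduler_exists: "\<exists>\<sigma>. is_scheduler iota P \<sigma>"
proof -
  obtain f where "f \<in> selectors"
    using selectors_nonempty by blast
  then have "is_scheduler iota P (\<lambda>ss as. dirac_rule f (last ss))"
    using decision_rule_dirac_rule unfolding is_scheduler_def decision_rule_def by blast
  then show ?thesis by blast
qed

lemma path_weight_nonneg:
  "is_scheduler iota P \<sigma> \<Longrightarrow> \<pi> \<in> Paths iota P \<tau> \<Longrightarrow> 0 \<le> Pr_path iota P \<sigma> \<pi> * Pr_obs obs \<tau> \<pi>"
  unfolding Paths_def by (cases \<pi>) (auto intro!: mult_nonneg_nonneg Pr_path_nonneg Pr_obs_nonneg)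

lemma state_weight_nonneg: "is_scheduler iota P \<sigma> \<Longrightarrow> 0 \<le> state_weight \<sigma> \<tau> s"
  unfolding state_weight_def by (auto intro: sum_nonneg path_weight_nonneg)

lemma action_weight_nonneg: "is_scheduler iota P \<sigma> \<Longrightarrow> 0 \<le> action_weight \<sigma> \<tau> s \<alpha>"
  unfolding action_weight_def
  by (rule sum_nonneg, rule mult_nonneg_nonneg) (auto intro: path_weight_nonneg scheduler_nonneg)

lemma sum_action_weight:
  assumes "is_scheduler iota P \<sigma>"
  shows "(\<Sum>\<alpha>\<in>UNIV. action_weight \<sigma> \<tau> s \<alpha>) = state_weight \<sigma> \<tau> s"
proof -
  have "(\<Sum>\<alpha>\<in>UNIV. action_weight \<sigma> \<tau> s \<alpha>) = (\<Sum>\<pi>\<in>{\<pi>\<in>Paths iota P \<tau>. last (fst \<pi>) = s}.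
      Pr_path iota P \<sigma> \<pi> * Pr_obs obs \<tau> \<pi> * (\<Sum>\<alpha>\<in>UNIV. \<sigma> (fst \<pi>) (snd \<pi>) \<alpha>))"
    unfolding action_weight_def by (subst sum.swap) (simp add: sum_distrib_left)
  also have "\<dots> = state_weight \<sigma> \<tau> s"
    unfolding state_weight_def using scheduler_sum[OF assms] by (intro sum.cong) auto
  finally show ?thesis .
qed

lemma action_weight_eq_0:
  "is_scheduler iota P \<sigma> \<Longrightarrow> \<alpha> \<notin> AvAct P s \<Longrightarrow> action_weight \<sigma> \<tau> s \<alpha> = 0"
  unfolding action_weight_def using scheduler_eq_0 by (intro sum.neutral) fastforce

lemma state_weight_snoc_decision_rule:
  assumes "\<tau> \<noteq> []" and "\<forall>s \<alpha>. action_weight \<sigma> \<tau> s \<alpha> = state_weight \<sigma> \<tau> s * \<delta> s \<alpha>"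
  shows "state_weight \<sigma> (\<tau> @ [z]) = ubel_update (state_weight \<sigma> \<tau>) \<delta> z"
  using assms unfolding ubel_update_def
  by (simp add: fun_eq_iff state_weight_snoc sum_distrib_left mult.assoc)

lemma action_weight_le_state_weight:
  assumes "is_scheduler iota P \<sigma>"
  shows "action_weight \<sigma> \<tau> s \<alpha> \<le> state_weight \<sigma> \<tau> s"
proof -
  have "action_weight \<sigma> \<tau> s \<alpha> \<le> (\<Sum>\<beta>\<in>UNIV. action_weight \<sigma> \<tau> s \<beta>)"
    by (rule member_le_sum) (auto intro: action_weight_nonneg[OF assms])
  then show ?thesis
    by (simp add: sum_action_weight[OF assms])
qed

lemma decision_rule_conditional:
  assumes \<sigma>: "is_scheduler iota P \<sigma>" and \<delta>\<^sub>0: "decision_rule \<delta>\<^sub>0"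
  shows "decision_rule (\<lambda>s \<alpha>. if 0 < state_weight \<sigma> \<tau> s
           then action_weight \<sigma> \<tau> s \<alpha> / state_weight \<sigma> \<tau> s else \<delta>\<^sub>0 s \<alpha>)"
  unfolding decision_rule_def is_distr_def
proof (intro allI conjI impI)
  fix s \<alpha>
  show "0 \<le> (if 0 < state_weight \<sigma> \<tau> s
      then action_weight \<sigma> \<tau> s \<alpha> / state_weight \<sigma> \<tau> s else \<delta>\<^sub>0 s \<alpha>)"
    using action_weight_nonneg[OF \<sigma>] decision_rule_nonneg[OF \<delta>\<^sub>0] by simp
next
  fix s
  show "(\<Sum>\<alpha>\<in>UNIV. if 0 < state_weight \<sigma> \<tau> s
      then action_weight \<sigma> \<tau> s \<alpha> / state_weight \<sigma> \<tau> s else \<delta>\<^sub>0 s \<alpha>) = 1"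
    using sum_action_weight[OF \<sigma>, of \<tau> s] \<delta>\<^sub>0 unfolding decision_rule_def is_distr_def
    by (cases "0 < state_weight \<sigma> \<tau> s") (simp_all flip: sum_divide_distrib)
next
  fix s \<alpha>
  assume "0 < (if 0 < state_weight \<sigma> \<tau> s
      then action_weight \<sigma> \<tau> s \<alpha> / state_weight \<sigma> \<tau> s else \<delta>\<^sub>0 s \<alpha>)"
  then show "\<alpha> \<in> AvAct P s"
    using action_weight_eq_0[OF \<sigma>, of \<alpha> s \<tau>] \<delta>\<^sub>0 unfolding decision_rule_def
    by (cases "\<alpha> \<in> AvAct P s") (auto split: if_splits)
qed

lemma scheduler_decision_rule:
  assumes \<sigma>: "is_scheduler iota P \<sigma>"
  obtains \<delta> where "decision_rule \<delta>"
    and "\<forall>s \<alpha>. action_weight \<sigma> \<tau> s \<alpha> = state_weight \<sigma> \<tau> s * \<delta> s \<alpha>"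
proof -
  obtain f where "f \<in> selectors"
    using selectors_nonempty by blast
  define \<delta> where "\<delta> s \<alpha> = (if 0 < state_weight \<sigma> \<tau> s
      then action_weight \<sigma> \<tau> s \<alpha> / state_weight \<sigma> \<tau> s else dirac_rule f s \<alpha>)" for s \<alpha>
  have "decision_rule \<delta>"
    unfolding \<delta>_def using \<sigma> decision_rule_dirac_rule[OF \<open>f \<in> selectors\<close>]
    by (rule decision_rule_conditional)
  moreover have "action_weight \<sigma> \<tau> s \<alpha> = state_weight \<sigma> \<tau> s * \<delta> s \<alpha>" for s \<alpha>
  proof (cases "0 < state_weight \<sigma> \<tau> s")
    case False
    then have "state_weight \<sigma> \<tau> s = 0"
      using state_weight_nonneg[OF \<sigma>] by (simp add: order_less_le)
    then show ?thesis
      using action_weight_nonneg[OF \<sigma>] action_weight_le_state_weight[OF \<sigma>]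
      by (metis mult_eq_0_iff order_antisym)
  qed (simp add: \<delta>_def)
  ultimately show thesis
    using that by blast
qed

lemma scheduler_override_last:
  assumes \<sigma>: "is_scheduler iota P \<sigma>" and \<delta>: "decision_rule \<delta>"
  obtains \<sigma>' where "is_scheduler iota P \<sigma>'" and "state_weight \<sigma>' \<tau> = state_weight \<sigma> \<tau>"
    and "\<forall>s \<alpha>. action_weight \<sigma>' \<tau> s \<alpha> = state_weight \<sigma> \<tau> s * \<delta> s \<alpha>"
proof
  define \<sigma>' where "\<sigma>' ss as = (if length ss = length \<tau> then \<delta> (last ss) else \<sigma> ss as)"
    for ss :: "'s list" and as :: "'a list"
  show "is_scheduler iota P \<sigma>'"
    using \<sigma> \<delta> unfolding is_scheduler_def \<sigma>'_def decision_rule_def by auto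
  have "Pr_path iota P \<sigma>' \<pi> = Pr_path iota P \<sigma> \<pi>" if "\<pi> \<in> Paths iota P \<tau>" for \<pi>
  proof -
    obtain ss as where \<pi>: "\<pi> = (ss, as)"
      by fastforce
    have "length ss = length as + 1" "length ss = length \<tau>"
      using that is_path_length unfolding \<pi> Paths_def by auto
    then show ?thesis
      unfolding \<pi> Pr_path_def Let_def \<sigma>'_def by (intro arg_cong2[where f="(*)"] refl prod.cong) auto
  qed
  then show weight: "state_weight \<sigma>' \<tau> = state_weight \<sigma> \<tau>"
    unfolding state_weight_def by (intro ext sum.cong) auto
  show "\<forall>s \<alpha>. action_weight \<sigma>' \<tau> s \<alpha> = state_weight \<sigma> \<tau> s * \<delta> s \<alpha>"
  proof (intro allI)
    fix s \<alpha>
    have "action_weight \<sigma>' \<tau> s \<alpha> = (\<Sum>\<pi>\<in>{\<pi>\<in>Paths iota P \<tau>. last (fst \<pi>) = s}.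
        Pr_path iota P \<sigma>' \<pi> * Pr_obs obs \<tau> \<pi> * \<delta> s \<alpha>)"
      unfolding action_weight_def \<sigma>'_def by (intro sum.cong) (auto simp: Paths_def split_def)
    also have "\<dots> = state_weight \<sigma>' \<tau> s * \<delta> s \<alpha>"
      unfolding state_weight_def by (simp add: sum_distrib_right)
    finally show "action_weight \<sigma>' \<tau> s \<alpha> = state_weight \<sigma> \<tau> s * \<delta> s \<alpha>"
      using weight by simp
  qed
qed

lemma ubels_rev_Cons:
  "ys \<noteq> [] \<Longrightarrow>
     ubels_rev (z # ys) = {ubel_update u \<delta> z | u \<delta>. u \<in> ubels_rev ys \<and> decision_rule \<delta>}"
  by (cases ys) auto

text \<open>A scheduler matters only through the conditional distribution of its next action given the
  current state, and any decision rule can be grafted onto a scheduler at the current length.\<close>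

lemma ubels_rev_eq_state_weights:
  "\<tau> \<noteq> [] \<Longrightarrow> ubels_rev (rev \<tau>) = (\<lambda>\<sigma>. state_weight \<sigma> \<tau>) ` {\<sigma>. is_scheduler iota P \<sigma>}"
proof (induction \<tau> rule: rev_nonempty_induct)
  case (single z)
  then show ?case
    using scheduler_exists by (auto simp: state_weight_singleton)
next
  case (snoc z \<tau>)
  have "ubels_rev (rev (\<tau> @ [z]))
      = {ubel_update (state_weight \<sigma> \<tau>) \<delta> z | \<sigma> \<delta>. is_scheduler iota P \<sigma> \<and> decision_rule \<delta>}"
    (is "_ = ?U")
    using snoc by (auto simp: ubels_rev_Cons)
  also have "?U = (\<lambda>\<sigma>. state_weight \<sigma> (\<tau> @ [z])) ` {\<sigma>. is_scheduler iota P \<sigma>}"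
  proof (intro equalityI subsetI)
    fix u
    assume "u \<in> ?U"
    then obtain \<sigma> \<delta> where \<sigma>: "is_scheduler iota P \<sigma>" and \<delta>: "decision_rule \<delta>"
      and u: "u = ubel_update (state_weight \<sigma> \<tau>) \<delta> z"
      by blast
    obtain \<sigma>' where \<sigma>': "is_scheduler iota P \<sigma>'" and same: "state_weight \<sigma>' \<tau> = state_weight \<sigma> \<tau>"
      and act: "\<forall>s \<alpha>. action_weight \<sigma>' \<tau> s \<alpha> = state_weight \<sigma> \<tau> s * \<delta> s \<alpha>"
      using scheduler_override_last[OF \<sigma> \<delta>] by blast
    have "state_weight \<sigma>' (\<tau> @ [z]) = u"
      using state_weight_snoc_decision_rule[OF snoc(1), of \<sigma>' \<delta> z] act same u by simp
    with \<sigma>' show "u \<in> (\<lambda>\<sigma>. state_weight \<sigma> (\<tau> @ [z])) ` {\<sigma>. is_scheduler iota P \<sigma>}"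
      by blast
  next
    fix u
    assume "u \<in> (\<lambda>\<sigma>. state_weight \<sigma> (\<tau> @ [z])) ` {\<sigma>. is_scheduler iota P \<sigma>}"
    then obtain \<sigma> where \<sigma>: "is_scheduler iota P \<sigma>" and u: "u = state_weight \<sigma> (\<tau> @ [z])"
      by blast
    obtain \<delta> where "decision_rule \<delta>"
      and "\<forall>s \<alpha>. action_weight \<sigma> \<tau> s \<alpha> = state_weight \<sigma> \<tau> s * \<delta> s \<alpha>"
      using scheduler_decision_rule[OF \<sigma>] by blast
    then show "u \<in> ?U"
      using state_weight_snoc_decision_rule[OF snoc(1)] u \<sigma> by blast
  qed
  finally show ?case .
qed

lemma conditional_risk_eq_dot:
  "(\<Sum>\<pi>\<in>Paths iota P \<tau>. Pr_cond iota P obs \<sigma> \<pi> \<tau> * r (last (fst \<pi>)))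
     = dot (normalized (state_weight \<sigma> \<tau>)) r"
proof -
  define T where "T = Pr_trace iota P obs \<sigma> \<tau>"
  have T: "T = (\<Sum>s\<in>UNIV. state_weight \<sigma> \<tau> s)"
    unfolding T_def Pr_trace_def state_weight_def
    by (rule sum.group[symmetric]) (auto simp: finite_Paths)
  have "(\<Sum>\<pi>\<in>Paths iota P \<tau>. Pr_cond iota P obs \<sigma> \<pi> \<tau> * r (last (fst \<pi>)))
      = (\<Sum>s\<in>UNIV. \<Sum>\<pi>\<in>{\<pi>\<in>Paths iota P \<tau>. last (fst \<pi>) = s}.
           Pr_cond iota P obs \<sigma> \<pi> \<tau> * r (last (fst \<pi>)))"
    by (rule sum.group[symmetric]) (auto simp: finite_Paths)
  also have "\<dots> = (\<Sum>s\<in>UNIV. \<Sum>\<pi>\<in>{\<pi>\<in>Paths iota P \<tau>. last (fst \<pi>) = s}.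
      Pr_path iota P \<sigma> \<pi> * Pr_obs obs \<tau> \<pi> / T * r s)"
    unfolding Pr_cond_def T_def by (intro sum.cong) (auto simp: mult.commute)
  also have "\<dots> = dot (normalized (state_weight \<sigma> \<tau>)) r"
    unfolding dot_def normalized_def T state_weight_def
    by (simp add: sum_distrib_right sum_divide_distrib)
  finally show ?thesis .
qed

lemma risk_values_eq:
  assumes "\<tau> \<noteq> []"
  shows "(\<lambda>\<sigma>. \<Sum>\<pi>\<in>Paths iota P \<tau>. Pr_cond iota P obs \<sigma> \<pi> \<tau> * r (last (fst \<pi>)))
           ` {\<sigma>. is_scheduler iota P \<sigma>}
         = (\<lambda>b. dot b r) ` est_MDP iota P obs \<tau>"
proof -
  have "est_MDP iota P obs \<tau> = normalized ` ubels_rev (rev \<tau>)"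
    unfolding est_MDP_def using assms by (simp add: est_rev_eq_normalized)
  also have "\<dots> = (\<lambda>\<sigma>. normalized (state_weight \<sigma> \<tau>)) ` {\<sigma>. is_scheduler iota P \<sigma>}"
    using ubels_rev_eq_state_weights[OF assms] by (simp add: image_image)
  finally show ?thesis
    by (simp add: image_image conditional_risk_eq_dot)
qed

end

theorem theorem2:
  fixes iota :: "'s::finite \<Rightarrow> real"
    and P :: "'s \<Rightarrow> 'a::finite \<Rightarrow> ('s \<Rightarrow> real) option"
    and obs :: "'s \<Rightarrow> 'z::finite \<Rightarrow> real"
    and \<tau> :: "'z list"
    and r :: "'s \<Rightarrow> real"
  assumes "is_mdp iota P obs"
    and "\<tau> \<noteq> []"
    and "\<forall>s. 0 \<le> r s"
  shows "\<exists>bel \<in> Vert (est_MDP iota P obs \<tau>).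
           Risk iota P obs r \<tau> = (\<Sum>s\<in>UNIV. bel s * r s) \<and>
           (\<forall>bel' \<in> Vert (est_MDP iota P obs \<tau>). (\<Sum>s\<in>UNIV. bel' s * r s) \<le> Risk iota P obs r \<tau>)"
proof -
  interpret mdp iota P obs
    by unfold_locales (fact assms(1))
  define E where "E = est_MDP iota P obs \<tau>"
  obtain G where G: "finite G" "G \<noteq> {}" "G \<subseteq> E" "\<forall>b\<in>E. b = (\<lambda>_. 0) \<or> convex_comb_of G b"
    and G_nonneg: "\<forall>g\<in>G. \<forall>s. 0 \<le> g s"
    using est_MDP_spanned[OF assms(2)] unfolding E_def by blast
  have "\<forall>g\<in>G. 0 \<le> dot g r"
    using G_nonneg assms(3) unfolding dot_def by (simp add: sum_nonneg)
  then obtain b where b: "b \<in> Vert E" and max: "\<forall>x\<in>E. dot x r \<le> dot b r"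
    using linear_max_at_Vert[OF G] by blast
  have "Risk iota P obs r \<tau> = Sup ((\<lambda>x. dot x r) ` E)"
    unfolding Risk_def E_def risk_values_eq[OF assms(2)] ..
  also have "\<dots> = dot b r"
    using b max unfolding Vert_def by (intro cSup_eq_maximum) auto
  finally show ?thesis
    using b max unfolding E_def[symmetric] Vert_def dot_def by auto
qed

end
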